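(* Let $H$ be a real Hilbert space with inner product $(\cdot,\cdot)$, let $G:H\to H$ be a bounded, self-adjoint, positive definite linear operator (i.e. $(Gv,v)>0$ for $v\neq0$), let $\bar u\in H$, and let $0<\alpha\le\frac12$. Let $(u_j)_{j\ge0}$ be the Mitlar iterates: $[(1-\alpha)G+\alpha I]u_0=\bar u$ and $[(1-\alpha)G+\alpha I](u_j-u_{j-1})=\bar u-Gu_{j-1}$ for $j\ge1$. Define $E_0(v)=\frac12(Gv,v)-(\bar u,v)$ for $v\in H$. Then for every $j\ge0$, $$E_0(u_j)-E_0(u_{j+1})=\Big(\big[(\tfrac12-\alpha)G+\alpha I\big](u_{j+1}-u_j),\,u_{j+1}-u_j\Big)\ge0,$$ with equality only when $u_{j+1}=u_j$. In particular $E_0(u_{j+1})<E_0(u_j)$ unless $u_{j+1}=u_j$. *)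

theory Defs
  imports "HOL-Analysis.Analysis"
begin

definition E0 :: "('a::real_inner \<Rightarrow> 'a) \<Rightarrow> 'a \<Rightarrow> 'a \<Rightarrow> real" where
  "E0 G ubar v = (1/2) * (G v \<bullet> v) - ubar \<bullet> v"

definition mitlar_iterates ::
  "('a::real_vector \<Rightarrow> 'a) \<Rightarrow> 'a \<Rightarrow> real \<Rightarrow> (nat \<Rightarrow> 'a) \<Rightarrow> bool" where
  "mitlar_iterates G ubar \<alpha> u \<longleftrightarrow>
     (1 - \<alpha>) *\<^sub>R G (u 0) + \<alpha> *\<^sub>R u 0 = ubar \<and>
     (\<forall>j\<ge>1. (1 - \<alpha>) *\<^sub>R G (u j - u (j - 1)) + \<alpha> *\<^sub>R (u j - u (j - 1))
               = ubar - G (u (j - 1)))"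

end

theory Submission
  imports Defs
begin

text \<open>With \<open>d = u (j+1) - u j\<close>, symmetry of \<open>G\<close> gives
  \<open>E\<^sub>0(u j) - E\<^sub>0(u (j+1)) = (ubar - G (u j), d) - (G d, d)/2\<close>, and the Mitlar recursion
  replaces \<open>ubar - G (u j)\<close> by \<open>[(1-\<alpha>)G + \<alpha>I] d\<close>. The resulting quadratic form
  \<open>(1/2 - \<alpha>)(G d, d) + \<alpha> |d|\<^sup>2\<close> is at least \<open>\<alpha> |d|\<^sup>2\<close> when \<open>\<alpha> \<le> 1/2\<close>, so only
  semidefiniteness of \<open>G\<close> is needed: strict decrease comes from the \<open>\<alpha> |d|\<^sup>2\<close> term.\<close>

lemma E0_diff_add:
  fixes G :: "'a::real_inner \<Rightarrow> 'a"
  assumes "linear G" and "\<And>v w. G v \<bullet> w = v \<bullet> G w"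
  shows "E0 G ubar a - E0 G ubar (a + d) = (ubar - G a) \<bullet> d - (1/2) * (G d \<bullet> d)"
proof -
  interpret linear G by fact
  have "G a \<bullet> d = G d \<bullet> a"
    using assms(2)[of a d] by (simp add: inner_commute)
  then show ?thesis
    unfolding E0_def
    by (simp add: add inner_add_left inner_add_right inner_diff_left algebra_simps inner_commute)
qed

lemma mitlar_iterates_Suc:
  assumes "mitlar_iterates G ubar \<alpha> u"
  shows "(1 - \<alpha>) *\<^sub>R G (u (Suc j) - u j) + \<alpha> *\<^sub>R (u (Suc j) - u j) = ubar - G (u j)"
  using assms unfolding mitlar_iterates_def
  by (metis diff_Suc_1 le_add1 plus_1_eq_Suc)

lemma E0_mitlar_decrease:
  fixes G :: "'a::real_inner \<Rightarrow> 'a"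
  assumes "linear G" and "\<And>v w. G v \<bullet> w = v \<bullet> G w"
    and "mitlar_iterates G ubar \<alpha> u"
  shows "E0 G ubar (u j) - E0 G ubar (u (Suc j))
           = ((1/2 - \<alpha>) *\<^sub>R G (u (Suc j) - u j) + \<alpha> *\<^sub>R (u (Suc j) - u j)) \<bullet> (u (Suc j) - u j)"
proof -
  define d where "d = u (Suc j) - u j"
  have "E0 G ubar (u j) - E0 G ubar (u (Suc j)) = (ubar - G (u j)) \<bullet> d - (1/2) * (G d \<bullet> d)"
    using E0_diff_add[OF assms(1,2), of ubar "u j" d] by (simp add: d_def)
  also have "\<dots> = ((1 - \<alpha>) *\<^sub>R G d + \<alpha> *\<^sub>R d) \<bullet> d - (1/2) * (G d \<bullet> d)"
    using mitlar_iterates_Suc[OF assms(3), of j] by (simp add: d_def)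
  also have "\<dots> = ((1/2 - \<alpha>) *\<^sub>R G d + \<alpha> *\<^sub>R d) \<bullet> d"
    by (simp add: inner_add_left algebra_simps)
  finally show ?thesis by (simp add: d_def)
qed

lemma relaxed_form_lower_bound:
  fixes G :: "'a::real_inner \<Rightarrow> 'a"
  assumes "G d \<bullet> d \<ge> 0" and "\<alpha> \<le> 1/2"
  shows "((1/2 - \<alpha>) *\<^sub>R G d + \<alpha> *\<^sub>R d) \<bullet> d \<ge> \<alpha> * (d \<bullet> d)"
  using assms by (simp add: inner_add_left)

theorem mainTheorem9:
  fixes G :: "'a::{real_inner, complete_space} \<Rightarrow> 'a"
    and ubar :: 'a and \<alpha> :: real and u :: "nat \<Rightarrow> 'a"
  assumes "bounded_linear G"
    and "\<And>v w. G v \<bullet> w = v \<bullet> G w"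
    and "\<And>v. v \<noteq> 0 \<Longrightarrow> G v \<bullet> v > 0"
    and "0 < \<alpha>" and "\<alpha> \<le> 1/2"
    and "mitlar_iterates G ubar \<alpha> u"
  shows "\<forall>j. E0 G ubar (u j) - E0 G ubar (u (Suc j))
              = ((1/2 - \<alpha>) *\<^sub>R G (u (Suc j) - u j) + \<alpha> *\<^sub>R (u (Suc j) - u j)) \<bullet> (u (Suc j) - u j)
           \<and> E0 G ubar (u j) - E0 G ubar (u (Suc j)) \<ge> 0
           \<and> (E0 G ubar (u j) - E0 G ubar (u (Suc j)) = 0 \<longrightarrow> u (Suc j) = u j)
           \<and> (u (Suc j) \<noteq> u j \<longrightarrow> E0 G ubar (u (Suc j)) < E0 G ubar (u j))"
proof -
  have "linear G"
    using assms(1) bounded_linear.linear by blast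
  have G_nonneg: "G v \<bullet> v \<ge> 0" for v
    using assms(3)[of v] \<open>linear G\<close> by (cases "v = 0") (auto simp: linear_0)
  note identity = E0_mitlar_decrease[OF \<open>linear G\<close> assms(2,6)]
  have bound: "E0 G ubar (u j) - E0 G ubar (u (Suc j)) \<ge> \<alpha> * (norm (u (Suc j) - u j))^2" for j
    using relaxed_form_lower_bound[where G=G, OF G_nonneg assms(5)] identity
    by (simp add: power2_norm_eq_inner)
  have step_pos: "\<alpha> * (norm (u (Suc j) - u j))^2 > 0" if "u (Suc j) \<noteq> u j" for j
    using assms(4) that by simp
  show ?thesis
  proof (intro allI conjI impI)
    fix j
    show "0 \<le> E0 G ubar (u j) - E0 G ubar (u (Suc j))"
      using bound[of j] assms(4) by (meson order_trans mult_nonneg_nonneg less_imp_le zero_le_power2)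
    show "u (Suc j) = u j" if "E0 G ubar (u j) - E0 G ubar (u (Suc j)) = 0"
      using bound[of j] step_pos[of j] that by fastforce
    show "E0 G ubar (u (Suc j)) < E0 G ubar (u j)" if "u (Suc j) \<noteq> u j"
      using bound[of j] step_pos[OF that] by simp
  qed (rule identity)
qed

end
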